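(* Let $\vec G$ be a directed graph whose underlying graph $G$ is bipartite (and simple), and let $M$ be a set of edges of $\vec G$ such that for every vertex $v$ of $\vec G$ there is at least one edge of $M$ directed into $v$. If $\vec G$ admits an $M$-complete $\{P_5,T_5\}$-decomposition, then $\vec G$ (and hence $G$) admits a decomposition into paths of length $5$.
   Context: A directed graph is a graph together with an orientation of its edges; edges are ordered pairs $(a,b)$ written $ab$ (directed from $a$ to $b$). Trails and paths in a directed graph are trails and paths of the underlying undirected graph (orientations ignored). $P_5$ is the path of length $5$ (five edges). $T_5$ is the unique bipartite trail of length $5$ that is not a path, i.e. a trail $v_0v_1v_2v_3v_4v_5$ with all of $v_0,\dots,v_4$ distinct and $v_5=v_1$. A $\{P_5,T_5\}$-decomposition of $\vec G$ is a partition of its edge set into edge sets of subgraphs each of which is a copy of $P_5$ or of $T_5$. Given such a decomposition $\mathcal D$, an edge $ab$ is inward in $\mathcal D$ if, for the element $T\in\mathcal D$ containing $ab$, $d_T(a)=1$. $\mathcal D$ is $M$-complete if every edge of $M$ is inward in $\mathcal D$. *)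

theory Defs
  imports Main
begin

definition simple_digraph :: "'a set \<Rightarrow> ('a \<times> 'a) set \<Rightarrow> bool" where
  "simple_digraph V D \<longleftrightarrow> finite V \<and> D \<subseteq> V \<times> V \<and>
     (\<forall>a b. (a, b) \<in> D \<longrightarrow> a \<noteq> b \<and> (b, a) \<notin> D)"

definition und :: "'a \<times> 'a \<Rightarrow> 'a set" where
  "und e = {fst e, snd e}"

definition bipartite_digraph :: "'a set \<Rightarrow> ('a \<times> 'a) set \<Rightarrow> bool" where
  "bipartite_digraph V D \<longleftrightarrow>
     (\<exists>A \<subseteq> V. \<forall>(a, b) \<in> D. (a \<in> A \<longleftrightarrow> b \<notin> A))"

text \<open>The set of arcs T forms a trail of length 5 along the vertex sequence vs = v0 ... v5
  (orientations ignored): its underlying edges are exactly the five edges v_i v_(i+1),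
  and these are pairwise distinct as arcs of T.\<close>
definition trail5_on :: "'a list \<Rightarrow> ('a \<times> 'a) set \<Rightarrow> bool" where
  "trail5_on vs T \<longleftrightarrow> length vs = 6 \<and> finite T \<and> card T = 5 \<and> inj_on und T \<and>
     und ` T = {{vs ! i, vs ! Suc i} | i. i < 5}"

definition is_P5 :: "('a \<times> 'a) set \<Rightarrow> bool" where
  "is_P5 T \<longleftrightarrow> (\<exists>vs. trail5_on vs T \<and> distinct vs)"

definition is_T5 :: "('a \<times> 'a) set \<Rightarrow> bool" where
  "is_T5 T \<longleftrightarrow> (\<exists>vs. trail5_on vs T \<and> distinct (take 5 vs) \<and> vs ! 5 = vs ! 1)"

definition is_decomposition :: "(('a \<times> 'a) set \<Rightarrow> bool) \<Rightarrow> ('a \<times> 'a) set \<Rightarrow> ('a \<times> 'a) set set \<Rightarrow> bool" where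
  "is_decomposition P D \<D> \<longleftrightarrow> \<Union>\<D> = D \<and> (\<forall>T \<in> \<D>. P T \<and> T \<noteq> {}) \<and>
     (\<forall>T \<in> \<D>. \<forall>T' \<in> \<D>. T \<noteq> T' \<longrightarrow> T \<inter> T' = {})"

definition P5T5_decomposition :: "('a \<times> 'a) set \<Rightarrow> ('a \<times> 'a) set set \<Rightarrow> bool" where
  "P5T5_decomposition D \<D> \<longleftrightarrow> is_decomposition (\<lambda>T. is_P5 T \<or> is_T5 T) D \<D>"

definition P5_decomposition :: "('a \<times> 'a) set \<Rightarrow> ('a \<times> 'a) set set \<Rightarrow> bool" where
  "P5_decomposition D \<D> \<longleftrightarrow> is_decomposition is_P5 D \<D>"

definition deg_in :: "('a \<times> 'a) set \<Rightarrow> 'a \<Rightarrow> nat" where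
  "deg_in T v = card {e \<in> T. fst e = v \<or> snd e = v}"

definition inward :: "('a \<times> 'a) set set \<Rightarrow> 'a \<times> 'a \<Rightarrow> bool" where
  "inward \<D> e \<longleftrightarrow> (\<forall>T \<in> \<D>. e \<in> T \<longrightarrow> deg_in T (fst e) = 1)"

definition M_complete :: "('a \<times> 'a) set \<Rightarrow> ('a \<times> 'a) set set \<Rightarrow> bool" where
  "M_complete M \<D> \<longleftrightarrow> (\<forall>e \<in> M. inward \<D> e)"

end

theory Submission
  imports Defs
begin

text \<open>Take an M-complete decomposition and a part T that is a copy of T_5, traversed as
  s c r q p c. Some arc (u, p) of M enters p; M-completeness forces the part E containing it to
  start u p a b x. Exchanging the edge pc of T with the arc up turns T into the path s c r q p u
  and E into a trail c p a b x y; bipartiteness keeps c off the positions of b and y, so both new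
  parts are again P_5 or T_5, and the arcs of M stay inward. The number of copies of T_5 drops,
  except when E was a path u p a b c y: then E becomes the T_5 y c p a b c, with the same c and
  with b in the role of p. Call x linked to y (relative to c) if some P_5 part starts with an
  arc of M into x and continues x a y c; the exchange creates links only out of p and nothing
  links into p, so the set of vertices reachable from p by links shrinks, and repeating the
  exchange eventually lowers the number of copies of T_5.\<close>

lemma length_6_conv: "length vs = 6 \<Longrightarrow> \<exists>a b c d e f. vs = [a,b,c,d,e,f]"
  by (simp add: length_Suc_conv numeral_eq_Suc) blast

lemma und_Pair [simp]: "und (a, b) = {a, b}"
  by (simp add: und_def)

lemma trail5_on_iff:
  "trail5_on [a,b,c,d,e,f] T \<longleftrightarrow> finite T \<and> card T = 5 \<and> inj_on und T \<and>
     und ` T = {{a,b},{b,c},{c,d},{d,e},{e,f}}"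
proof -
  have "{{[a,b,c,d,e,f] ! i, [a,b,c,d,e,f] ! Suc i} | i. i < 5} =
      (\<lambda>i. {[a,b,c,d,e,f] ! i, [a,b,c,d,e,f] ! Suc i}) ` {..<5}"
    by blast
  also have "{..<5::nat} = {0,1,2,3,4}"
    by auto
  finally show ?thesis
    unfolding trail5_on_def by (simp add: numeral_eq_Suc)
qed

lemma trail5_onD:
  assumes "trail5_on [a,b,c,d,e,f] T"
  shows "finite T" "card T = 5" "inj_on und T" "und ` T = {{a,b},{b,c},{c,d},{d,e},{e,f}}"
  using assms unfolding trail5_on_iff by simp_all

lemma trail5_on_rev:
  "trail5_on [a,b,c,d,e,f] T \<Longrightarrow> trail5_on [f,e,d,c,b,a] T"
  unfolding trail5_on_iff by (simp add: insert_commute)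

lemma trail5_on_edges_distinct:
  assumes "trail5_on [a,b,c,d,e,f] T"
  shows "distinct [{a,b},{b,c},{c,d},{d,e},{e,f}]"
proof (rule card_distinct)
  have "card (und ` T) = card T"
    by (rule card_image[OF trail5_onD(3)[OF assms]])
  then show "card (set [{a,b},{b,c},{c,d},{d,e},{e,f}]) = length [{a,b},{b,c},{c,d},{d,e},{e,f}]"
    using trail5_onD(2,4)[OF assms] by simp
qed

lemma trail5_on_nonempty: "trail5_on vs T \<Longrightarrow> T \<noteq> {}"
  unfolding trail5_on_def by auto

lemma P5_or_T5_nonempty: "is_P5 T \<or> is_T5 T \<Longrightarrow> T \<noteq> {}"
  unfolding is_P5_def is_T5_def by (auto dest: trail5_on_nonempty)

lemma is_P5E:
  assumes "is_P5 T"
  obtains a b c d e f where "trail5_on [a,b,c,d,e,f] T" "distinct [a,b,c,d,e,f]"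
proof -
  from assms obtain vs where vs: "trail5_on vs T" "distinct vs"
    unfolding is_P5_def by blast
  have "length vs = 6"
    using vs(1) by (simp add: trail5_on_def)
  then obtain a b c d e f where "vs = [a,b,c,d,e,f]"
    using length_6_conv by blast
  with vs show thesis
    using that by blast
qed

lemma is_T5E:
  assumes "is_T5 T"
  obtains a b c d e where "trail5_on [a,b,c,d,e,b] T" "distinct [a,b,c,d,e]"
proof -
  from assms obtain vs where vs: "trail5_on vs T" "distinct (take 5 vs)" "vs ! 5 = vs ! 1"
    unfolding is_T5_def by blast
  have "length vs = 6"
    using vs(1) by (simp add: trail5_on_def)
  then obtain a b c d e f where vs_eq: "vs = [a,b,c,d,e,f]"
    using length_6_conv by blast
  have "f = b" "distinct [a,b,c,d,e]"
    using vs(2,3) unfolding vs_eq by simp_all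
  then show thesis
    using that vs(1) unfolding vs_eq by blast
qed

lemma is_P5I: "trail5_on [a,b,c,d,e,f] T \<Longrightarrow> distinct [a,b,c,d,e,f] \<Longrightarrow> is_P5 T"
  unfolding is_P5_def by blast

lemma is_T5I: "trail5_on [a,b,c,d,e,b] T \<Longrightarrow> distinct [a,b,c,d,e] \<Longrightarrow> is_T5 T"
  unfolding is_T5_def by (rule exI[of _ "[a,b,c,d,e,b]"]) simp

lemma deg_in_neq_1_if_two_neighbours:
  assumes "finite F" "inj_on und F" "{a,v} \<in> und ` F" "{v,b} \<in> und ` F" "a \<noteq> b"
  shows "deg_in F v \<noteq> 1"
proof -
  obtain e1 e2 where e: "e1 \<in> F" "und e1 = {a,v}" "e2 \<in> F" "und e2 = {v,b}"
    using assms(3,4) by blast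
  then have "e1 \<noteq> e2"
    using assms(5) by (auto simp: doubleton_eq_iff)
  moreover have "{e1, e2} \<subseteq> {e \<in> F. fst e = v \<or> snd e = v}"
    using e by (auto simp: und_def doubleton_eq_iff)
  then have "card {e1, e2} \<le> deg_in F v"
    unfolding deg_in_def by (rule card_mono[rotated]) (use assms(1) in simp)
  ultimately show ?thesis by simp
qed

lemma deg_in_eq_1_if_unique_edge:
  assumes "inj_on und F" "e0 \<in> F" "v \<in> und e0" "\<And>X. X \<in> und ` F \<Longrightarrow> v \<in> X \<Longrightarrow> X = und e0"
  shows "deg_in F v = 1"
proof -
  have "{e \<in> F. fst e = v \<or> snd e = v} = {e0}"
  proof (intro equalityI subsetI)
    fix e assume "e \<in> {e \<in> F. fst e = v \<or> snd e = v}"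
    then have "e \<in> F" "und e = und e0"
      using assms(4) by (auto simp: und_def)
    then show "e \<in> {e0}"
      using assms(1,2) by (auto dest: inj_onD)
  qed (use assms(2,3) in \<open>auto simp: und_def\<close>)
  then show ?thesis
    unfolding deg_in_def by simp
qed

lemma trail5_on_inner_deg_neq_1:
  assumes "trail5_on [v0,v1,v2,v3,v4,v5] T" "v0 \<noteq> v2" "v1 \<noteq> v3" "v2 \<noteq> v4" "v3 \<noteq> v5"
  shows "deg_in T v1 \<noteq> 1" "deg_in T v2 \<noteq> 1" "deg_in T v3 \<noteq> 1" "deg_in T v4 \<noteq> 1"
proof -
  note T = trail5_onD[OF assms(1)]
  show "deg_in T v1 \<noteq> 1"
    by (rule deg_in_neq_1_if_two_neighbours[of T v0 v1 v2]) (use T assms(2-5) in simp_all)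
  show "deg_in T v2 \<noteq> 1"
    by (rule deg_in_neq_1_if_two_neighbours[of T v1 v2 v3]) (use T assms(2-5) in simp_all)
  show "deg_in T v3 \<noteq> 1"
    by (rule deg_in_neq_1_if_two_neighbours[of T v2 v3 v4]) (use T assms(2-5) in simp_all)
  show "deg_in T v4 \<noteq> 1"
    by (rule deg_in_neq_1_if_two_neighbours[of T v3 v4 v5]) (use T assms(2-5) in simp_all)
qed

lemma trail5_on_deg_1_endpoint:
  assumes "trail5_on [v0,v1,v2,v3,v4,v5] T" "v0 \<noteq> v2" "v1 \<noteq> v3" "v2 \<noteq> v4" "v3 \<noteq> v5"
    and "e \<in> T" "deg_in T (fst e) = 1"
  shows "fst e = v0 \<or> fst e = v5"
proof -
  have "und e \<in> {{v0,v1},{v1,v2},{v2,v3},{v3,v4},{v4,v5}}"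
    using imageI[OF assms(6), of und] unfolding trail5_onD(4)[OF assms(1)] .
  moreover have "fst e \<in> und e"
    by (simp add: und_def)
  ultimately have "fst e = v0 \<or> fst e = v1 \<or> fst e = v2 \<or> fst e = v3 \<or> fst e = v4 \<or> fst e = v5"
    by auto
  then show ?thesis
    using trail5_on_inner_deg_neq_1[OF assms(1-5)] assms(7) by auto
qed

lemma trail5_on_start_deg_1:
  assumes "trail5_on [v0,v1,v2,v3,v4,v5] T" "v0 \<notin> {v1,v2,v3,v4,v5}" "e \<in> T" "v0 \<in> und e"
  shows "deg_in T v0 = 1" "und e = {v0,v1}"
proof -
  note edges = trail5_onD[OF assms(1)]
  have unique: "X = {v0,v1}" if "X \<in> und ` T" "v0 \<in> X" for X
  proof -
    have "X = {v0,v1} \<or> X = {v1,v2} \<or> X = {v2,v3} \<or> X = {v3,v4} \<or> X = {v4,v5}"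
      using that(1) unfolding edges(4) by simp
    then show ?thesis
      using that(2) assms(2) by (elim disjE) auto
  qed
  show "und e = {v0,v1}"
    using unique assms(3,4) by simp
  then show "deg_in T v0 = 1"
    using deg_in_eq_1_if_unique_edge[OF edges(3) assms(3,4)] unique by simp
qed

lemma image_und_Diff: "inj_on und T \<Longrightarrow> e \<in> T \<Longrightarrow> und ` (T - {e}) = und ` T - {und e}"
  by (auto simp: inj_on_def)

lemma card_insert_Diff_swap:
  "finite T \<Longrightarrow> e \<in> T \<Longrightarrow> x \<notin> T \<Longrightarrow> card (insert x (T - {e})) = card T"
  by (cases "card T") (auto simp: card_Diff_singleton)

lemma trail5_on_replace_first_edge:
  assumes "trail5_on [v0,v1,v2,v3,v4,v5] E" "e0 \<in> E" "und e0 = {v0,v1}" "e \<notin> E" "und e = {w,v1}"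
    and "inj_on und (insert e (E - {e0}))"
  shows "trail5_on [w,v1,v2,v3,v4,v5] (insert e (E - {e0}))"
proof -
  note edges = trail5_onD[OF assms(1)]
  have "und ` E - {{v0,v1}} = {{v1,v2},{v2,v3},{v3,v4},{v4,v5}}"
    using trail5_on_edges_distinct[OF assms(1)] unfolding edges(4) by auto
  then have "und ` insert e (E - {e0}) = {{w,v1},{v1,v2},{v2,v3},{v3,v4},{v4,v5}}"
    using image_und_Diff[OF edges(3) assms(2)] assms(3,5) by simp
  moreover have "card (insert e (E - {e0})) = 5"
    using card_insert_Diff_swap[OF edges(1) assms(2,4)] edges(2) by simp
  ultimately show ?thesis
    unfolding trail5_on_iff using assms(6) edges(1) by simp
qed

lemma trail5_on_P5_reverse_position:
  assumes "trail5_on [v0,v1,v2,v3,v4,v5] F" "distinct [v0,v1,v2,v3,v4,v5]"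
    and "trail5_on [w0,w1,w2,w3,v1,w5] F" "distinct [w0,w1,w2,w3,v1,w5]"
  shows "w1 = v4"
proof -
  have same: "{{v0,v1},{v1,v2},{v2,v3},{v3,v4},{v4,v5}} = {{w0,w1},{w1,w2},{w2,w3},{w3,v1},{v1,w5}}"
    using trail5_onD(4)[OF assms(1)] trail5_onD(4)[OF assms(3)] by simp
  have "{w3,v1} \<in> {{v0,v1},{v1,v2},{v2,v3},{v3,v4},{v4,v5}}"
    unfolding same by simp
  then have "w3 = v0 \<or> w3 = v2"
    using assms(2,4) by (auto simp: doubleton_eq_iff)
  moreover have "{w2,w3} \<in> {{v0,v1},{v1,v2},{v2,v3},{v3,v4},{v4,v5}}"
    unfolding same by simp
  ultimately have "w3 = v2 \<and> w2 = v3"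
    using assms(2,4) by (auto simp: doubleton_eq_iff)
  moreover have "{w1,w2} \<in> {{v0,v1},{v1,v2},{v2,v3},{v3,v4},{v4,v5}}"
    unfolding same by simp
  ultimately show "w1 = v4"
    using assms(2,4) by (auto simp: doubleton_eq_iff)
qed

lemma card_rtrancl_image_less:
  assumes fin: "finite {y. (p,y) \<in> R\<^sup>*}"
    and R': "\<And>z w. (z,w) \<in> R' \<Longrightarrow> z = p \<or> (z,w) \<in> R"
    and no_in: "\<And>z. (z,p) \<notin> R" and "(p,b) \<in> R" "b \<noteq> p"
  shows "card {y. (b,y) \<in> R'\<^sup>*} < card {y. (p,y) \<in> R\<^sup>*}"
proof -
  have "(b,w) \<in> R\<^sup>* \<and> w \<noteq> p" if "(b,w) \<in> R'\<^sup>*" for w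
    using that
  proof (induction rule: rtrancl_induct)
    case (step y z)
    then have "(y,z) \<in> R" using R' by blast
    then show ?case using step no_in by (meson rtrancl.rtrancl_into_rtrancl)
  qed (use \<open>b \<noteq> p\<close> in simp)
  then have "{y. (b,y) \<in> R'\<^sup>*} \<subset> {y. (p,y) \<in> R\<^sup>*}"
    using \<open>(p,b) \<in> R\<close> by (blast intro: converse_rtrancl_into_rtrancl)
  then show ?thesis using fin by (rule psubset_card_mono[rotated])
qed

definition exchange :: "('a \<times> 'a) set set \<Rightarrow> ('a \<times> 'a) set \<Rightarrow> ('a \<times> 'a) set \<Rightarrow>
    ('a \<times> 'a) set \<Rightarrow> ('a \<times> 'a) set \<Rightarrow> ('a \<times> 'a) set set"
  where "exchange \<D> T E T' E' = insert T' (insert E' (\<D> - {T, E}))"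

definition nonpath_count :: "('a \<times> 'a) set set \<Rightarrow> nat" where
  "nonpath_count \<D> = card {F \<in> \<D>. \<not> is_P5 F}"

lemma is_decomposition_exchange:
  assumes dec: "is_decomposition P D \<D>" and "T \<in> \<D>" "E \<in> \<D>"
    and same: "T' \<union> E' = T \<union> E" and "T' \<inter> E' = {}"
    and "P T'" "P E'" "T' \<noteq> {}" "E' \<noteq> {}"
  shows "is_decomposition P D (exchange \<D> T E T' E')"
proof -
  have disj: "F \<inter> G = {}" if "F \<in> \<D>" "G \<in> \<D>" "F \<noteq> G" for F G
    using dec that unfolding is_decomposition_def by blast
  have rest: "F \<inter> (T' \<union> E') = {}" if "F \<in> \<D> - {T, E}" for F
    using disj[of F T] disj[of F E] that assms(2,3) unfolding same by blast
  have "\<Union>(exchange \<D> T E T' E') = T' \<union> E' \<union> \<Union>(\<D> - {T, E})"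
    unfolding exchange_def by blast
  also have "\<dots> = \<Union>\<D>"
    unfolding same using assms(2,3) by blast
  finally show ?thesis
    using dec assms(5-9) rest disj unfolding is_decomposition_def exchange_def
    by (simp add: Int_commute) blast
qed

lemma M_complete_exchange:
  assumes "M_complete M \<D>"
    and "\<And>e. e \<in> M \<Longrightarrow> e \<in> T' \<Longrightarrow> deg_in T' (fst e) = 1"
    and "\<And>e. e \<in> M \<Longrightarrow> e \<in> E' \<Longrightarrow> deg_in E' (fst e) = 1"
  shows "M_complete M (exchange \<D> T E T' E')"
  using assms unfolding M_complete_def inward_def exchange_def by blast

lemma nonpath_count_exchange:
  assumes "finite \<D>" "T \<in> \<D>" "E \<in> \<D>" "T \<noteq> E" "\<not> is_P5 T" "is_P5 T'"
  shows "nonpath_count (exchange \<D> T E T' E') + (if is_P5 E' then 1 else 0) + (if is_P5 E then 0 else 1)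
    \<le> nonpath_count \<D>"
proof -
  define R where "R = {F \<in> \<D> - {T, E}. \<not> is_P5 F}"
  have fin: "finite R"
    unfolding R_def using assms(1) by simp
  define S where "S = (if is_P5 E' then R else insert E' R)"
  have "{F \<in> exchange \<D> T E T' E'. \<not> is_P5 F} \<subseteq> S"
    unfolding S_def R_def exchange_def using assms(6) by auto
  then have "nonpath_count (exchange \<D> T E T' E') \<le> card S"
    unfolding nonpath_count_def by (rule card_mono[rotated]) (simp add: S_def fin)
  moreover have "card S \<le> card R + (if is_P5 E' then 0 else 1)"
    unfolding S_def using fin by (simp add: card_insert_if)
  moreover have "{F \<in> \<D>. \<not> is_P5 F} = insert T (if is_P5 E then R else insert E R)"
    unfolding R_def using assms(2,3,5) by auto
  then have "nonpath_count \<D> = card R + 1 + (if is_P5 E then 0 else 1)"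
    unfolding nonpath_count_def using fin assms(4) by (simp add: R_def)
  ultimately show ?thesis
    by (simp split: if_splits)
qed

locale covered_bipartite_digraph =
  fixes V :: "'a set" and D M :: "('a \<times> 'a) set" and A :: "'a set"
  assumes simple: "simple_digraph V D"
    and bipartition: "\<forall>(a, b) \<in> D. a \<in> A \<longleftrightarrow> b \<notin> A"
    and M_subset: "M \<subseteq> D"
    and M_covers: "\<forall>v \<in> V. \<exists>u. (u, v) \<in> M"
begin

lemma finite_arcs: "finite D"
  using simple unfolding simple_digraph_def by (meson finite_SigmaI finite_subset)

lemma arc_neq: "(a, b) \<in> D \<Longrightarrow> a \<noteq> b"
  using simple unfolding simple_digraph_def by auto

lemma inj_on_und: "F \<subseteq> D \<Longrightarrow> inj_on und F"
proof (rule inj_onI)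
  fix x y assume "F \<subseteq> D" "x \<in> F" "y \<in> F" "und x = und y"
  then have "x \<in> D" "y \<in> D" "und x = und y"
    by auto
  then show "x = y"
    using simple unfolding simple_digraph_def und_def
    by (cases x; cases y) (auto simp: doubleton_eq_iff)
qed

lemma edge_arc:
  assumes "F \<subseteq> D" "{a, b} \<in> und ` F"
  obtains "(a, b) \<in> D" | "(b, a) \<in> D"
  using assms by (auto simp: und_def doubleton_eq_iff) (use that in blast)+

lemma edge_sides: "F \<subseteq> D \<Longrightarrow> {a, b} \<in> und ` F \<Longrightarrow> a \<in> A \<longleftrightarrow> b \<notin> A"
  by (rule edge_arc) (use bipartition in auto)

lemma edge_in_vertices: "F \<subseteq> D \<Longrightarrow> {a, b} \<in> und ` F \<Longrightarrow> a \<in> V"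
  by (rule edge_arc) (use simple in \<open>auto simp: simple_digraph_def\<close>)

lemma arc_in_part: "F \<subseteq> D \<Longrightarrow> e \<in> D \<Longrightarrow> und e \<in> und ` F \<Longrightarrow> e \<in> F"
  using inj_on_und[of D] by (auto dest: inj_onD)

lemma trail5_on_sides:
  assumes "F \<subseteq> D" "trail5_on [v0,v1,v2,v3,v4,v5] F"
  shows "v0 \<in> A \<longleftrightarrow> v1 \<notin> A" "v1 \<in> A \<longleftrightarrow> v2 \<notin> A" "v2 \<in> A \<longleftrightarrow> v3 \<notin> A"
    "v3 \<in> A \<longleftrightarrow> v4 \<notin> A" "v4 \<in> A \<longleftrightarrow> v5 \<notin> A"
  by (rule edge_sides[OF assms(1)]; simp add: trail5_onD(4)[OF assms(2)])+

definition admissible :: "('a \<times> 'a) set set \<Rightarrow> bool" where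
  "admissible \<D> \<longleftrightarrow> P5T5_decomposition D \<D> \<and> M_complete M \<D>"

lemma admissibleD:
  assumes "admissible \<D>"
  shows "is_decomposition (\<lambda>T. is_P5 T \<or> is_T5 T) D \<D>" "\<Union>\<D> = D"
    and "\<And>F. F \<in> \<D> \<Longrightarrow> is_P5 F \<or> is_T5 F"
    and "\<And>F G. F \<in> \<D> \<Longrightarrow> G \<in> \<D> \<Longrightarrow> F \<noteq> G \<Longrightarrow> F \<inter> G = {}"
  using assms unfolding admissible_def P5T5_decomposition_def is_decomposition_def by simp_all

lemma admissible_part_subset: "admissible \<D> \<Longrightarrow> F \<in> \<D> \<Longrightarrow> F \<subseteq> D"
  using admissibleD(2) by blast

lemma admissible_part_unique:
  assumes "admissible \<D>" "F \<in> \<D>" "G \<in> \<D>" "X \<in> und ` F" "X \<in> und ` G"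
  shows "F = G"
proof (rule ccontr)
  assume "F \<noteq> G"
  obtain e e' where "e \<in> F" "e' \<in> G" "und e = X" "und e' = X"
    using assms(4,5) by blast
  moreover from this have "e \<in> D" "e' \<in> D"
    using admissible_part_subset[OF assms(1)] assms(2,3) by blast+
  ultimately have "e = e'" "e \<in> F" "e' \<in> G"
    using inj_onD[OF inj_on_und[of D]] by auto
  then show False
    using admissibleD(4)[OF assms(1-3) \<open>F \<noteq> G\<close>] by blast
qed

lemma admissible_arc_in_part:
  assumes "admissible \<D>" "e \<in> D"
  obtains F where "F \<in> \<D>" "e \<in> F"
  using admissibleD(2)[OF assms(1)] assms(2) by blast

lemma admissible_inward: "admissible \<D> \<Longrightarrow> F \<in> \<D> \<Longrightarrow> e \<in> F \<Longrightarrow> e \<in> M \<Longrightarrow> deg_in F (fst e) = 1"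
  unfolding admissible_def M_complete_def inward_def by blast

lemma admissible_finite: "admissible \<D> \<Longrightarrow> finite \<D>"
  using admissible_part_subset finite_arcs by (meson Pow_iff finite_Pow_iff finite_subset subsetI)

lemma admissible_exchange:
  assumes "admissible \<D>" "T \<in> \<D>" "E \<in> \<D>" "T' \<union> E' = T \<union> E" "T' \<inter> E' = {}"
    and "is_P5 T' \<or> is_T5 T'" "is_P5 E' \<or> is_T5 E'"
    and "\<And>e. e \<in> M \<Longrightarrow> e \<in> T' \<Longrightarrow> deg_in T' (fst e) = 1"
    and "\<And>e. e \<in> M \<Longrightarrow> e \<in> E' \<Longrightarrow> deg_in E' (fst e) = 1"
  shows "admissible (exchange \<D> T E T' E')"
proof -
  have "T' \<noteq> {}" "E' \<noteq> {}"
    using P5_or_T5_nonempty[OF assms(6)] P5_or_T5_nonempty[OF assms(7)] .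
  then have "is_decomposition (\<lambda>T. is_P5 T \<or> is_T5 T) D (exchange \<D> T E T' E')"
    by (rule is_decomposition_exchange[OF admissibleD(1)[OF assms(1)] assms(2-7)])
  moreover have "M_complete M (exchange \<D> T E T' E')"
    by (rule M_complete_exchange[OF _ assms(8,9)]) (use assms(1) in \<open>simp add: admissible_def\<close>)
  ultimately show ?thesis
    by (simp add: admissible_def P5T5_decomposition_def)
qed

lemma admissible_part_from_inward_arc:
  assumes "admissible \<D>" "E \<in> \<D>" "(u, p) \<in> E" "(u, p) \<in> M"
  obtains a b x y where "is_P5 E" "trail5_on [u,p,a,b,x,y] E" "distinct [u,p,a,b,x,y]"
  | a b x where "\<not> is_P5 E" "trail5_on [u,p,a,b,x,p] E" "distinct [u,p,a,b,x]"
proof -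
  have deg_u: "deg_in E u = 1"
    using admissible_inward[OF assms] by simp
  show thesis
  proof (cases "is_P5 E")
    case True
    then obtain w0 w1 w2 w3 w4 w5 where t: "trail5_on [w0,w1,w2,w3,w4,w5] E"
      and d: "distinct [w0,w1,w2,w3,w4,w5]" by (rule is_P5E)
    have "u = w0 \<or> u = w5"
      using trail5_on_deg_1_endpoint[OF t _ _ _ _ assms(3)] d deg_u by auto
    then show thesis
    proof
      assume "u = w0"
      then have "p = w1"
        using trail5_on_start_deg_1(2)[OF t _ assms(3)] d by (auto simp: doubleton_eq_iff)
      then show thesis
        using that(1) True t d \<open>u = w0\<close> by blast
    next
      assume "u = w5"
      then have "p = w4"
        using trail5_on_start_deg_1(2)[OF trail5_on_rev[OF t] _ assms(3)] d
        by (auto simp: doubleton_eq_iff)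
      then show thesis
        using that(1)[of w3 w2 w1 w0] True trail5_on_rev[OF t] d \<open>u = w5\<close> by auto
    qed
  next
    case False
    then have "is_T5 E"
      using admissibleD(3)[OF assms(1,2)] by blast
    then obtain w0 w1 w2 w3 w4 where t: "trail5_on [w0,w1,w2,w3,w4,w1] E"
      and d: "distinct [w0,w1,w2,w3,w4]" by (rule is_T5E)
    have "u = w0 \<or> u = w1"
      using trail5_on_deg_1_endpoint[OF t _ _ _ _ assms(3)] d deg_u by auto
    moreover have "u \<noteq> w1"
      using trail5_on_inner_deg_neq_1(1)[OF t] d deg_u by auto
    ultimately have "u = w0" "p = w1"
      using trail5_on_start_deg_1(2)[OF t _ assms(3)] d by (auto simp: doubleton_eq_iff)
    then show thesis
      using that(2) False t d by blast
  qed
qed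

lemma T5_inward_arc_tail:
  assumes adm: "admissible \<D>" and T: "T \<in> \<D>"
    and tT: "trail5_on [s,c,r,q,p,c] T" and dT: "distinct [s,c,r,q,p]" and e: "e \<in> T" "e \<in> M"
  shows "fst e = s"
proof -
  have deg: "deg_in T (fst e) = 1"
    by (rule admissible_inward[OF adm T e])
  have "fst e = s \<or> fst e = c"
    by (rule trail5_on_deg_1_endpoint[OF tT _ _ _ _ e(1) deg]) (use dT in auto)
  then show ?thesis
    using trail5_on_inner_deg_neq_1(1)[OF tT] dT deg by auto
qed

lemma T5_exchange_path:
  assumes adm: "admissible \<D>" and T: "T \<in> \<D>"
    and tT: "trail5_on [s,c,r,q,p,c] T" and dT: "distinct [s,c,r,q,p]"
    and uM: "(u, p) \<in> M" and epc: "epc \<in> T" "und epc = {p, c}"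
  defines "T' \<equiv> insert (u, p) (T - {epc})"
  shows "(u, p) \<notin> T" "epc \<notin> M" "distinct [s,c,r,q,p,u]" "trail5_on [s,c,r,q,p,u] T'"
    and "\<And>e. e \<in> M \<Longrightarrow> e \<in> T' \<Longrightarrow> deg_in T' (fst e) = 1"
proof -
  have TD: "T \<subseteq> D" and upD: "(u, p) \<in> D"
    using admissible_part_subset[OF adm T] M_subset uM by auto
  note edges = trail5_onD[OF tT] and tail = T5_inward_arc_tail[OF adm T tT dT]
  show "epc \<notin> M"
    using tail[OF epc(1)] epc(2) dT by (auto simp: und_def doubleton_eq_iff)
  show up_notin: "(u, p) \<notin> T"
  proof
    assume "(u, p) \<in> T"
    then have "und (u, p) \<in> und ` T" "u = s"
      using tail[of "(u, p)"] uM by (blast, simp)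
    then show False
      using dT unfolding edges(4) by (simp add: doubleton_eq_iff)
  qed
  have "u \<in> A \<longleftrightarrow> p \<notin> A"
    using bipartition upD by auto
  then have "u \<noteq> s" "u \<noteq> r"
    using trail5_on_sides[OF TD tT] by blast+
  moreover have "u \<noteq> q" "u \<noteq> c"
    using arc_in_part[OF TD upD] up_notin edges(4) by (auto simp: insert_commute)
  moreover have "u \<noteq> p"
    using arc_neq[OF upD] .
  ultimately show dT': "distinct [s,c,r,q,p,u]"
    using dT by auto
  have "inj_on und T'"
    by (rule inj_on_und) (use TD upD in \<open>auto simp: T'_def\<close>)
  then have "trail5_on [u,p,q,r,c,s] T'"
    unfolding T'_def using trail5_on_replace_first_edge[OF trail5_on_rev[OF tT] epc(1) _ up_notin]
      epc(2) by (simp add: insert_commute)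
  then show tT': "trail5_on [s,c,r,q,p,u] T'"
    by (rule trail5_on_rev)
  show "deg_in T' (fst e) = 1" if "e \<in> M" "e \<in> T'" for e
  proof (cases "e = (u, p)")
    case True
    then show ?thesis
      using trail5_on_start_deg_1(1)[OF trail5_on_rev[OF tT'] _ that(2)] dT' by auto
  next
    case False
    then have "fst e = s"
      using tail that unfolding T'_def by blast
    then show ?thesis
      using trail5_on_start_deg_1(1)[OF tT' _ that(2)] dT' by (auto simp: und_def)
  qed
qed

lemma exchange_first_arc_of_part:
  assumes adm: "admissible \<D>" and T: "T \<in> \<D>" and E: "E \<in> \<D>" "T \<noteq> E"
    and epc: "epc \<in> T" "und epc = {p, c}" "epc \<notin> M" and cp: "c \<in> A \<longleftrightarrow> p \<notin> A"
    and uE: "(u, p) \<in> E" and tE: "trail5_on [u,p,a,b,x,y] E" and dE: "distinct [u,p,a,b,x]" "y \<noteq> u" "y \<noteq> b"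
  defines "E' \<equiv> insert epc (E - {(u, p)})"
  shows "trail5_on [c,p,a,b,x,y] E'" "distinct [c,p,a,b]" "c \<noteq> y" "y = p \<Longrightarrow> c \<noteq> x"
    and "\<And>e. e \<in> M \<Longrightarrow> e \<in> E' \<Longrightarrow> deg_in E' (fst e) = 1"
proof -
  have ED: "E \<subseteq> D"
    by (rule admissible_part_subset[OF adm E(1)])
  note edges = trail5_onD[OF tE]
  have epc_notin: "epc \<notin> E"
    using admissibleD(4)[OF adm T E] epc(1) by blast
  have "{p, c} \<notin> und ` E"
    using admissible_part_unique[OF adm T E(1)] epc E(2) by blast
  then have "c \<noteq> a" "y = p \<Longrightarrow> c \<noteq> x"
    unfolding edges(4) by (auto simp: insert_commute)
  moreover have "c \<noteq> b" "c \<noteq> y" "c \<noteq> p"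
    using trail5_on_sides[OF ED tE] cp by blast+
  ultimately show "distinct [c,p,a,b]" "c \<noteq> y" "y = p \<Longrightarrow> c \<noteq> x"
    using dE by auto
  have "inj_on und E'"
    by (rule inj_on_und) (use ED epc(1) admissible_part_subset[OF adm T] in \<open>auto simp: E'_def\<close>)
  then show tE': "trail5_on [c,p,a,b,x,y] E'"
    unfolding E'_def using trail5_on_replace_first_edge[OF tE uE _ epc_notin] epc(2)
    by (simp add: insert_commute)
  show "deg_in E' (fst e) = 1" if "e \<in> M" "e \<in> E'" for e
  proof -
    have "e \<in> E" "e \<noteq> (u, p)"
      using that epc(3) unfolding E'_def by auto
    have deg: "deg_in E (fst e) = 1"
      by (rule admissible_inward[OF adm E(1) \<open>e \<in> E\<close> that(1)])
    have inner: "deg_in E p \<noteq> 1" "deg_in E a \<noteq> 1" "deg_in E b \<noteq> 1" "deg_in E x \<noteq> 1"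
      using trail5_on_inner_deg_neq_1[OF tE] dE by auto
    have "fst e = u \<or> fst e = y"
      by (rule trail5_on_deg_1_endpoint[OF tE _ _ _ _ \<open>e \<in> E\<close> deg]) (use dE in auto)
    moreover have "fst e \<noteq> u"
    proof
      assume "fst e = u"
      then have "und e = und (u, p)"
        using trail5_on_start_deg_1(2)[OF tE _ \<open>e \<in> E\<close>] dE by (auto simp: und_def)
      then show False
        using inj_onD[OF edges(3) _ \<open>e \<in> E\<close> uE] \<open>e \<noteq> (u, p)\<close> by blast
    qed
    ultimately have "fst e = y"
      by blast
    then have "y \<notin> {x,b,a,p,c}"
      using deg inner \<open>c \<noteq> y\<close> by auto
    then show ?thesis
      using trail5_on_start_deg_1(1)[OF trail5_on_rev[OF tE'] _ that(2)] \<open>fst e = y\<close>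
      by (simp add: und_def)
  qed
qed

definition link :: "('a \<times> 'a) set set \<Rightarrow> 'a \<Rightarrow> 'a \<Rightarrow> 'a \<Rightarrow> bool" where
  "link \<D> c x y \<longleftrightarrow> (\<exists>F \<in> \<D>. \<exists>u a d. trail5_on [u,x,a,y,c,d] F \<and> distinct [u,x,a,y,c,d] \<and>
     (u, x) \<in> M \<and> (u, x) \<in> F)"

lemma no_link_into_T5_edge:
  assumes "admissible \<D>" "T \<in> \<D>" "\<not> is_P5 T" "{p, c} \<in> und ` T"
  shows "\<not> link \<D> c z p"
proof
  assume "link \<D> c z p"
  then obtain F u a d where F: "F \<in> \<D>" "trail5_on [u,z,a,p,c,d] F" "distinct [u,z,a,p,c,d]"
    unfolding link_def by blast
  then have "F = T"
    using admissible_part_unique[OF assms(1) F(1) assms(2) _ assms(4)] trail5_onD(4)[OF F(2)]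
    by simp
  then show False
    using is_P5I[OF F(2,3)] assms(3) by blast
qed

lemma link_exchange:
  assumes "trail5_on [s,c,r,q,p,u] T'" "distinct [s,c,r,q,p,u]" "\<not> is_P5 E'"
    and "link (exchange \<D> T E T' E') c z w"
  shows "z = p \<or> link \<D> c z w"
proof -
  obtain F u' a' d where F: "F \<in> exchange \<D> T E T' E'" "trail5_on [u',z,a',w,c,d] F"
    "distinct [u',z,a',w,c,d]" "(u', z) \<in> M" "(u', z) \<in> F"
    using assms(4) unfolding link_def by blast
  have "F = T' \<or> F = E' \<or> F \<in> \<D>"
    using F(1) unfolding exchange_def by blast
  moreover have "F \<noteq> E'"
    using is_P5I[OF F(2,3)] assms(3) by blast
  moreover have "z = p" if "F = T'"
    using trail5_on_P5_reverse_position[OF assms(1,2), of u' z a' w d] F(2,3) that by simp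
  ultimately show ?thesis
    unfolding link_def using F by blast
qed

lemma T5_exchange_admissible:
  assumes adm: "admissible \<D>" and T: "T \<in> \<D>" "\<not> is_P5 T"
    and tT: "trail5_on [s,c,r,q,p,c] T" and dT: "distinct [s,c,r,q,p]" and uM: "(u, p) \<in> M"
    and epc: "epc \<in> T" "und epc = {p, c}" and E: "E \<in> \<D>" "(u, p) \<in> E"
  defines "T' \<equiv> insert (u, p) (T - {epc})" and "E' \<equiv> insert epc (E - {(u, p)})"
  assumes E'_shape: "is_P5 E' \<or> is_T5 E'"
    and E'_inward: "\<And>e. e \<in> M \<Longrightarrow> e \<in> E' \<Longrightarrow> deg_in E' (fst e) = 1"
  shows "admissible (exchange \<D> T E T' E')"
    and "nonpath_count (exchange \<D> T E T' E') + (if is_P5 E' then 1 else 0) + (if is_P5 E then 0 else 1)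
      \<le> nonpath_count \<D>"
proof -
  note path = T5_exchange_path[OF adm T(1) tT dT uM epc, folded T'_def]
  have "T \<noteq> E"
    using E(2) path(1) by blast
  have "is_P5 T'"
    using is_P5I[OF path(4,3)] .
  moreover have "T' \<union> E' = T \<union> E" "T' \<inter> E' = {}"
    using admissibleD(4)[OF adm T(1) E(1) \<open>T \<noteq> E\<close>] epc(1) E(2) path(1)
    unfolding T'_def E'_def by blast+
  ultimately show "admissible (exchange \<D> T E T' E')"
    using admissible_exchange[OF adm T(1) E(1) _ _ _ E'_shape path(5) E'_inward] by blast
  show "nonpath_count (exchange \<D> T E T' E') + (if is_P5 E' then 1 else 0) + (if is_P5 E then 0 else 1)
      \<le> nonpath_count \<D>"
    by (rule nonpath_count_exchange[OF admissible_finite[OF adm] T(1) E(1) \<open>T \<noteq> E\<close> T(2)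
          \<open>is_P5 T'\<close>])
qed

lemma T5_exchange_step:
  assumes adm: "admissible \<D>" and T: "T \<in> \<D>" "\<not> is_P5 T"
    and tT: "trail5_on [s,c,r,q,p,c] T" and dT: "distinct [s,c,r,q,p]" and uM: "(u, p) \<in> M"
  obtains \<D>' where "admissible \<D>'" "nonpath_count \<D>' < nonpath_count \<D>"
  | \<D>' E' y a b where "admissible \<D>'" "nonpath_count \<D>' \<le> nonpath_count \<D>"
      "E' \<in> \<D>'" "\<not> is_P5 E'" "trail5_on [y,c,p,a,b,c] E'" "distinct [y,c,p,a,b]"
      "link \<D> c p b" "\<And>z w. link \<D>' c z w \<Longrightarrow> z = p \<or> link \<D> c z w"
proof -
  obtain epc where epc: "epc \<in> T" "und epc = {p, c}"
    using trail5_onD(4)[OF tT] by (metis insertI1 insert_commute imageE)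
  define T' where "T' = insert (u, p) (T - {epc})"
  note path = T5_exchange_path[OF adm T(1) tT dT uM epc, folded T'_def]
  obtain E where E: "E \<in> \<D>" "(u, p) \<in> E"
    using admissible_arc_in_part[OF adm] uM M_subset by blast
  have "T \<noteq> E"
    using E(2) path(1) by blast
  define E' where "E' = insert epc (E - {(u, p)})"
  have cp: "c \<in> A \<longleftrightarrow> p \<notin> A"
    using trail5_on_sides[OF admissible_part_subset[OF adm T(1)] tT] by blast
  note E'_part = exchange_first_arc_of_part[OF adm T(1) E(1) \<open>T \<noteq> E\<close> epc path(2) cp E(2),
      folded E'_def]
  note exchange = T5_exchange_admissible[OF adm T tT dT uM epc E, folded T'_def E'_def]
  show thesis
  proof (cases rule: admissible_part_from_inward_arc[OF adm E uM])
    case (2 a b x)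
    then have "is_T5 E'" "\<And>e. e \<in> M \<Longrightarrow> e \<in> E' \<Longrightarrow> deg_in E' (fst e) = 1"
      using E'_part[of a b x p] is_T5I[of c p a b x E'] by auto
    then show thesis
      using that(1) exchange 2(1) by simp
  next
    case (1 a b x y)
    then have tE': "trail5_on [c,p,a,b,x,y] E'" "distinct [c,p,a,b]" "c \<noteq> y"
      and inward': "\<And>e. e \<in> M \<Longrightarrow> e \<in> E' \<Longrightarrow> deg_in E' (fst e) = 1"
      using E'_part[of a b x y] by auto
    show thesis
    proof (cases "is_P5 E'")
      case True
      then show thesis
        using that(1) exchange inward' by simp
    next
      case False
      then have "x = c"
        using is_P5I[OF tE'(1)] tE'(2,3) 1(3) by auto
      then have T5E': "trail5_on [y,c,p,a,b,c] E'" "distinct [y,c,p,a,b]"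
        using tE' 1(3) unfolding trail5_on_iff by (auto simp: insert_commute)
      then have "is_P5 E' \<or> is_T5 E'"
        using is_T5I[OF T5E'] by simp
      note exchange = exchange[OF this inward']
      have "link \<D> c p b"
        unfolding link_def using E 1(2,3) uM \<open>x = c\<close> by blast
      show thesis
      proof (rule that(2)[OF exchange(1) _ _ False T5E' \<open>link \<D> c p b\<close>])
        show "nonpath_count (exchange \<D> T E T' E') \<le> nonpath_count \<D>"
          using exchange(2) by simp
        show "E' \<in> exchange \<D> T E T' E'"
          unfolding exchange_def by blast
        show "z = p \<or> link \<D> c z w" if "link (exchange \<D> T E T' E') c z w" for z w
          by (rule link_exchange[OF path(4,3) False that])
      qed
    qed
  qed
qed

definition links_from :: "('a \<times> 'a) set set \<Rightarrow> 'a \<Rightarrow> 'a \<Rightarrow> 'a set" where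
  "links_from \<D> c x = {y. (x, y) \<in> {(a, b). link \<D> c a b}\<^sup>*}"

lemma finite_links_from:
  assumes "admissible \<D>"
  shows "finite (links_from \<D> c x)"
proof (rule finite_subset)
  show "links_from \<D> c x \<subseteq> insert x V"
  proof
    fix y assume "y \<in> links_from \<D> c x"
    then have "(x, y) \<in> {(a, b). link \<D> c a b}\<^sup>*"
      unfolding links_from_def by simp
    then show "y \<in> insert x V"
    proof (cases rule: rtranclE)
      case (step z)
      then obtain F u a d where F: "F \<in> \<D>" "trail5_on [u,z,a,y,c,d] F"
        unfolding link_def by blast
      then have "{y, c} \<in> und ` F"
        using trail5_onD(4)[OF F(2)] by simp
      then show ?thesis
        using edge_in_vertices[OF admissible_part_subset[OF assms F(1)]] by blast
    qed simp
  qed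
  show "finite (insert x V)"
    using simple by (simp add: simple_digraph_def)
qed

lemma T5_removable:
  assumes "admissible \<D>" "T \<in> \<D>" "\<not> is_P5 T" "trail5_on [s,c,r,q,p,c] T" "distinct [s,c,r,q,p]"
  shows "\<exists>\<D>'. admissible \<D>' \<and> nonpath_count \<D>' < nonpath_count \<D>"
  using assms
proof (induction "card (links_from \<D> c p)" arbitrary: \<D> T s r q p rule: less_induct)
  case less
  note adm = less.prems(1) and T = less.prems(2,3) and tT = less.prems(4)
  have pc: "{p, c} \<in> und ` T"
    using trail5_onD(4)[OF tT] by simp
  then have "p \<in> V"
    using edge_in_vertices[OF admissible_part_subset[OF adm T(1)]] by blast
  then obtain u where uM: "(u, p) \<in> M"
    using M_covers by blast
  show ?case
  proof (cases rule: T5_exchange_step[OF adm T tT less.prems(5) uM])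
    case (1 \<D>')
    then show ?thesis by blast
  next
    case (2 \<D>' E' y a b)
    have "card (links_from \<D>' c b) < card (links_from \<D> c p)"
      unfolding links_from_def
    proof (rule card_rtrancl_image_less)
      show "finite {y. (p, y) \<in> {(a, b). link \<D> c a b}\<^sup>*}"
        using finite_links_from[OF adm] unfolding links_from_def .
      show "(z, p) \<notin> {(a, b). link \<D> c a b}" for z
        using no_link_into_T5_edge[OF adm T pc] by simp
    qed (use 2 in auto)
    then obtain \<D>'' where "admissible \<D>''" "nonpath_count \<D>'' < nonpath_count \<D>'"
      using less.hyps 2 by blast
    then show ?thesis
      using 2(2) by (meson order_less_le_trans)
  qed
qed

lemma admissible_imp_P5_decomposition:
  "admissible \<D> \<Longrightarrow> \<exists>\<D>'. P5_decomposition D \<D>'"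
proof (induction "nonpath_count \<D>" arbitrary: \<D> rule: less_induct)
  case less
  show ?case
  proof (cases "\<exists>T \<in> \<D>. \<not> is_P5 T")
    case False
    then have "P5_decomposition D \<D>"
      using admissibleD(1)[OF less.prems]
      unfolding P5_decomposition_def is_decomposition_def by blast
    then show ?thesis by blast
  next
    case True
    then obtain T where T: "T \<in> \<D>" "\<not> is_P5 T"
      by blast
    then have "is_T5 T"
      using admissibleD(3)[OF less.prems] by blast
    then obtain s c r q p where "trail5_on [s,c,r,q,p,c] T" "distinct [s,c,r,q,p]"
      by (rule is_T5E)
    then show ?thesis
      using T5_removable[OF less.prems T] less.hyps by blast
  qed
qed

end

theorem mainTheorem6:
  fixes V :: "'a set" and D M :: "('a \<times> 'a) set"
  assumes "simple_digraph V D"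
    and "bipartite_digraph V D"
    and "M \<subseteq> D"
    and "\<forall>v \<in> V. \<exists>u. (u, v) \<in> M"
    and "\<exists>\<D>. P5T5_decomposition D \<D> \<and> M_complete M \<D>"
  shows "\<exists>\<D>. P5_decomposition D \<D>"
proof -
  obtain A where "\<forall>(a, b) \<in> D. a \<in> A \<longleftrightarrow> b \<notin> A"
    using assms(2) unfolding bipartite_digraph_def by blast
  then interpret covered_bipartite_digraph V D M A
    using assms(1,3,4) by unfold_locales
  obtain \<D> where "admissible \<D>"
    using assms(5) unfolding admissible_def by blast
  then show ?thesis
    by (rule admissible_imp_P5_decomposition)
qed

end
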